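(* Let $R$ be a commutative ring with $1$ and let $(S,m)$ be a multiset in $R$ (a finite subset $S\subseteq R$ with multiplicities $m:S\to\{1,2,\dots\}$) such that $s-s^*$ is a unit of $R$ for all $s\ne s^*$ in $S$. Let $d(S)=\sum_{s\in S}m(s)$ and $t=d(S)-1$. Then there exist elements $\alpha(s,u)\in R$ for all $s\in S$ and $0\le u<m(s)$ such that for every integer $\ell\ge 0$, $$\sum_{s\in S}\sum_{0\le u<m(s)}\alpha(s,u)\binom{\ell}{u}s^{\ell-u}=\begin{cases}0&\text{if }\ell<t,\\1&\text{if }\ell=t.\end{cases}$$ (No condition is imposed for $\ell>t$.)
   Context: By convention, a term $\binom{\ell}{u}s^{\ell-u}$ with $u>\ell$ is $0$ (since $\binom{\ell}{u}=0$). *)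

theory Defs
  imports Main
begin

end

theory Submission
  imports Defs HOL.Modules "HOL-Library.Function_Algebras"
begin

text \<open>
  Let \<open>b\<^sub>s\<^sub>,\<^sub>u\<close> be the sequence \<open>l \<mapsto> (l choose u) s\<^bsup>l-u\<^esup>\<close> and \<open>V(m)\<close> the \<open>R\<close>-module
  of sequences spanned by the \<open>b\<^sub>s\<^sub>,\<^sub>u\<close> with \<open>s \<in> S\<close>, \<open>u < m s\<close>.  The operator
  \<open>D\<^sub>a w = (l \<mapsto> w (l + 1) - a w l)\<close> sends \<open>b\<^sub>a\<^sub>,\<^sub>u\<^sub>+\<^sub>1\<close> to \<open>b\<^sub>a\<^sub>,\<^sub>u\<close> and, for \<open>s \<noteq> a\<close>, sends
  \<open>b\<^sub>s\<^sub>,\<^sub>u\<close> to \<open>(s - a) b\<^sub>s\<^sub>,\<^sub>u + b\<^sub>s\<^sub>,\<^sub>u\<^sub>-\<^sub>1\<close>.  As \<open>s - a\<close> is a unit, induction on \<open>u\<close> gives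
  \<open>V(m') \<subseteq> D\<^sub>a(V(m))\<close>, where \<open>m'\<close> lowers the multiplicity of \<open>a\<close> by one.
  Now induct on \<open>d(S)\<close>: take \<open>v \<in> V(m')\<close> vanishing below \<open>t - 1\<close> with \<open>v (t - 1) = 1\<close>
  and a preimage \<open>w \<in> V(m)\<close>.  Subtracting a multiple of \<open>b\<^sub>a\<^sub>,\<^sub>0 \<in> ker D\<^sub>a\<close> makes \<open>w 0 = 0\<close>,
  and then the recurrence \<open>w (l + 1) = a w l + v l\<close> shows that \<open>w\<close> vanishes below \<open>t\<close>
  with \<open>w t = 1\<close>.
\<close>

interpretation seq: module "\<lambda>c (f :: nat \<Rightarrow> 'a :: comm_ring_1) l. c * f l"
  by unfold_locales (auto simp: algebra_simps)

definition binom_seq :: "'a :: comm_ring_1 \<Rightarrow> nat \<Rightarrow> nat \<Rightarrow> 'a" where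
  "binom_seq s u l = of_nat (l choose u) * s ^ (l - u)"

definition binom_seqs :: "'a :: comm_ring_1 set \<Rightarrow> ('a \<Rightarrow> nat) \<Rightarrow> (nat \<Rightarrow> 'a) set" where
  "binom_seqs S m = {binom_seq s u | s u. s \<in> S \<and> u < m s}"

definition shift_sub :: "'a :: comm_ring_1 \<Rightarrow> (nat \<Rightarrow> 'a) \<Rightarrow> nat \<Rightarrow> 'a" where
  "shift_sub a w l = w (Suc l) - a * w l"

definition binom_comb :: "('a :: comm_ring_1 \<Rightarrow> nat \<Rightarrow> 'a) \<Rightarrow> 'a set \<Rightarrow> ('a \<Rightarrow> nat) \<Rightarrow> nat \<Rightarrow> 'a" where
  "binom_comb \<alpha> S m l = (\<Sum>s\<in>S. \<Sum>u<m s. \<alpha> s u * binom_seq s u l)"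

lemma binom_seq_0_0 [simp]: "binom_seq s 0 0 = 1"
  by (simp add: binom_seq_def)

lemma shift_sub_binom_seq_0: "shift_sub a (binom_seq s 0) l = (s - a) * binom_seq s 0 l"
  by (simp add: shift_sub_def binom_seq_def algebra_simps)

lemma shift_sub_binom_seq_Suc:
  "shift_sub a (binom_seq s (Suc u)) l = (s - a) * binom_seq s (Suc u) l + binom_seq s u l"
proof (cases "Suc u \<le> l")
  case True
  then obtain k where "l = Suc u + k"
    using le_Suc_ex by blast
  then show ?thesis
    by (simp add: shift_sub_def binom_seq_def algebra_simps)
next
  case False
  then show ?thesis
    by (simp add: shift_sub_def binom_seq_def binomial_eq_0)
qed

lemma module_hom_shift_sub:
  "module_hom (\<lambda>c f l. c * f l) (\<lambda>c f l. c * f l) (shift_sub a)"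
  by (auto simp: module_hom_iff seq.module_axioms shift_sub_def algebra_simps)

lemma binom_seq_in_span:
  "s \<in> S \<Longrightarrow> u < m s \<Longrightarrow> binom_seq s u \<in> seq.span (binom_seqs S m)"
  by (auto simp: binom_seqs_def intro: seq.span_base)

lemma span_binom_seqs_decrement_subset:
  assumes "a \<in> S"
    and unit: "\<And>s. s \<in> S \<Longrightarrow> s \<noteq> a \<Longrightarrow> (s - a) dvd 1"
  shows "seq.span (binom_seqs S (m(a := m a - 1))) \<subseteq> shift_sub a ` seq.span (binom_seqs S m)"
proof (rule seq.span_minimal)
  let ?T = "shift_sub a ` seq.span (binom_seqs S m)"
  show T: "seq.subspace ?T"
    by (rule module_hom.subspace_image[OF module_hom_shift_sub seq.subspace_span])
  have scaled_in_T: "shift_sub a (\<lambda>l. c * binom_seq s u l) \<in> ?T" if "s \<in> S" "u < m s" for c s u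
    using that by (intro imageI seq.span_scale binom_seq_in_span)
  have at_a: "binom_seq a u \<in> ?T" if "u < m a - 1" for u
  proof
    show "binom_seq a u = shift_sub a (binom_seq a (Suc u))"
      by (simp add: fun_eq_iff shift_sub_binom_seq_Suc)
    show "binom_seq a (Suc u) \<in> seq.span (binom_seqs S m)"
      using that assms(1) by (intro binom_seq_in_span) auto
  qed
  have off_a: "binom_seq s u \<in> ?T" if s: "s \<in> S" "s \<noteq> a" and "u < m s" for s u
  proof -
    obtain c where c: "(s - a) * c = 1"
      using unit[OF s] by (metis dvdE)
    have shift_scaled: "shift_sub a (\<lambda>l. c * binom_seq s u l) = (\<lambda>l. c * shift_sub a (binom_seq s u) l)" for u
      by (simp add: fun_eq_iff shift_sub_def algebra_simps)
    have cancel: "c * ((s - a) * x) = x" for x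
      using c by (simp add: mult.assoc[symmetric] mult.commute[of c])
    show ?thesis
      using \<open>u < m s\<close>
    proof (induction u)
      case 0
      have "binom_seq s 0 = shift_sub a (\<lambda>l. c * binom_seq s 0 l)"
        by (simp add: fun_eq_iff shift_scaled shift_sub_binom_seq_0 cancel)
      also have "\<dots> \<in> ?T"
        using s(1) "0.prems" by (rule scaled_in_T)
      finally show ?case .
    next
      case (Suc u)
      have "binom_seq s (Suc u) = shift_sub a (\<lambda>l. c * binom_seq s (Suc u) l) - (\<lambda>l. c * binom_seq s u l)"
        by (simp add: fun_eq_iff shift_scaled shift_sub_binom_seq_Suc distrib_left cancel)
      also have "\<dots> \<in> ?T"
        using Suc s(1) by (intro seq.subspace_diff[OF T] seq.subspace_scale[OF T] scaled_in_T) auto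
      finally show ?case .
    qed
  qed
  show "binom_seqs S (m(a := m a - 1)) \<subseteq> ?T"
    using at_a off_a by (auto simp: binom_seqs_def split: if_splits)
qed

lemma span_binom_seqs_subset_binom_combs:
  assumes "finite S"
  shows "seq.span (binom_seqs S m) \<subseteq> range (\<lambda>\<alpha>. binom_comb \<alpha> S m)"
proof (rule seq.span_minimal)
  show "binom_seqs S m \<subseteq> range (\<lambda>\<alpha>. binom_comb \<alpha> S m)"
  proof (clarsimp simp: binom_seqs_def)
    fix s u assume "s \<in> S" "u < m s"
    define \<delta> where "\<delta> s' u' = (if s' = s \<and> u' = u then 1 else (0::'a))" for s' u'
    have "(\<Sum>u'<m s'. \<delta> s' u' * binom_seq s' u' l) = (if s' = s then binom_seq s u l else 0)" for s' l
      using \<open>u < m s\<close> by (cases "s' = s") (simp_all add: \<delta>_def if_distrib[of "\<lambda>x. x * _"] cong: if_cong)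
    then have "binom_seq s u = binom_comb \<delta> S m"
      using assms \<open>s \<in> S\<close> by (simp add: fun_eq_iff binom_comb_def)
    then show "binom_seq s u \<in> range (\<lambda>\<alpha>. binom_comb \<alpha> S m)"
      by blast
  qed
  let ?R = "range (\<lambda>\<alpha>. binom_comb \<alpha> S m)"
  show "seq.subspace ?R"
  proof (rule seq.subspaceI)
    have "0 = binom_comb (\<lambda>_ _. 0) S m"
      by (simp add: fun_eq_iff binom_comb_def)
    then show "0 \<in> ?R"
      by blast
  next
    fix x y assume "x \<in> ?R" "y \<in> ?R"
    then obtain \<alpha> \<beta> where "x = binom_comb \<alpha> S m" "y = binom_comb \<beta> S m"
      by blast
    then have "x + y = binom_comb (\<lambda>s u. \<alpha> s u + \<beta> s u) S m"
      by (simp add: fun_eq_iff binom_comb_def distrib_right sum.distrib)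
    then show "x + y \<in> ?R"
      by blast
  next
    fix c x assume "x \<in> ?R"
    then obtain \<alpha> where "x = binom_comb \<alpha> S m"
      by blast
    then have "(\<lambda>l. c * x l) = binom_comb (\<lambda>s u. c * \<alpha> s u) S m"
      by (simp add: fun_eq_iff binom_comb_def sum_distrib_left mult.assoc)
    then show "(\<lambda>l. c * x l) \<in> ?R"
      by blast
  qed
qed

lemma shift_sub_vanishing_imp_vanishing:
  assumes "w 0 = 0" and "\<forall>l<d. shift_sub a w l = 0"
  shows "l \<le> d \<Longrightarrow> w l = 0"
  by (induction l) (use assms in \<open>auto simp: shift_sub_def\<close>)

lemma sum_Suc_decrement:
  fixes m :: "'a \<Rightarrow> nat"
  assumes "finite S" "(\<Sum>s\<in>S. m s) = Suc d"
  obtains a where "a \<in> S" "m a \<noteq> 0" "(\<Sum>s\<in>S. (m(a := m a - 1)) s) = d"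
proof -
  obtain a where a: "a \<in> S" "m a \<noteq> 0"
    using assms by (metis sum.neutral nat.distinct(1))
  have "(\<Sum>s\<in>S. m s) = (\<Sum>s\<in>S. (m(a := m a - 1)) s + (if s = a then 1 else 0))"
    using a(2) by (intro sum.cong) auto
  then have "(\<Sum>s\<in>S. (m(a := m a - 1)) s) = d"
    using assms a(1) by (simp add: sum.distrib)
  with a that show ?thesis
    by blast
qed

lemma span_binom_seqs_first_one:
  assumes "finite S"
    and unit: "\<And>s s'. s \<in> S \<Longrightarrow> s' \<in> S \<Longrightarrow> s \<noteq> s' \<Longrightarrow> (s - s') dvd 1"
    and "(\<Sum>s\<in>S. m s) = Suc d"
  shows "\<exists>v\<in>seq.span (binom_seqs S m). (\<forall>l<d. v l = 0) \<and> v d = 1"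
  using assms(3)
proof (induction d arbitrary: m)
  case 0
  then obtain a where "a \<in> S" "m a \<noteq> 0"
    using sum_Suc_decrement[OF assms(1)] by blast
  then show ?case
    by (intro bexI[OF _ binom_seq_in_span[of a S 0 m]]) auto
next
  case (Suc d)
  then obtain a where a: "a \<in> S" "m a \<noteq> 0" "(\<Sum>s\<in>S. (m(a := m a - 1)) s) = Suc d"
    using sum_Suc_decrement[OF assms(1)] by blast
  then obtain v where v: "v \<in> seq.span (binom_seqs S (m(a := m a - 1)))" "\<forall>l<d. v l = 0" "v d = 1"
    using Suc.IH by blast
  have "\<And>s. s \<in> S \<Longrightarrow> s \<noteq> a \<Longrightarrow> (s - a) dvd 1"
    using unit a(1) by blast
  from subsetD[OF span_binom_seqs_decrement_subset[OF a(1) this] v(1)]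
  obtain w where w: "w \<in> seq.span (binom_seqs S m)" "shift_sub a w = v"
    by blast
  define w' where "w' = w - (\<lambda>l. w 0 * binom_seq a 0 l)"
  have "w' \<in> seq.span (binom_seqs S m)"
    unfolding w'_def using a w(1)
    by (intro seq.span_diff seq.span_scale binom_seq_in_span) auto
  moreover have shift_w': "shift_sub a w' = v"
    using w(2) by (simp add: fun_eq_iff w'_def shift_sub_def binom_seq_def algebra_simps)
  moreover have "w' 0 = 0"
    by (simp add: w'_def)
  then have vanish: "l \<le> d \<Longrightarrow> w' l = 0" for l
    using shift_sub_vanishing_imp_vanishing[of w' d a l] shift_w' v(2) by simp
  moreover have "w' (Suc d) = 1"
    using fun_cong[OF shift_w', of d] v(3) vanish[of d] by (simp add: shift_sub_def)
  ultimately show ?case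
    by (intro bexI[of _ w']) auto
qed

theorem lemma4:
  fixes S :: "'a :: comm_ring_1 set" and m :: "'a \<Rightarrow> nat"
  assumes "finite S"
    and "\<And>s. s \<in> S \<Longrightarrow> m s \<ge> 1"
    and "\<And>s s'. s \<in> S \<Longrightarrow> s' \<in> S \<Longrightarrow> s \<noteq> s' \<Longrightarrow> (s - s') dvd 1"
  shows "\<exists>\<alpha> :: 'a \<Rightarrow> nat \<Rightarrow> 'a. \<forall>l :: nat.
           (int l < int (\<Sum>s\<in>S. m s) - 1 \<longrightarrow>
              (\<Sum>s\<in>S. \<Sum>u<m s. \<alpha> s u * of_nat (l choose u) * s ^ (l - u)) = 0) \<and>
           (int l = int (\<Sum>s\<in>S. m s) - 1 \<longrightarrow>
              (\<Sum>s\<in>S. \<Sum>u<m s. \<alpha> s u * of_nat (l choose u) * s ^ (l - u)) = 1)"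
proof (cases "(\<Sum>s\<in>S. m s)")
  case 0
  then show ?thesis
    by simp
next
  case (Suc d)
  then obtain v where v: "v \<in> seq.span (binom_seqs S m)" "\<forall>l<d. v l = 0" "v d = 1"
    using span_binom_seqs_first_one[OF assms(1,3)] by blast
  then obtain \<alpha> where "v = binom_comb \<alpha> S m"
    using span_binom_seqs_subset_binom_combs[OF assms(1)] by blast
  then have "(\<Sum>s\<in>S. \<Sum>u<m s. \<alpha> s u * of_nat (l choose u) * s ^ (l - u)) = v l" for l
    by (simp add: binom_comb_def binom_seq_def mult.assoc)
  with v Suc show ?thesis
    by (intro exI[of _ \<alpha>]) auto
qed

end
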